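(* Let $(\mathfrak{g},[\cdot,\cdot]_{\mathfrak{g}})$ be a Leibniz algebra over a field $\mathbf{K}$, $(V;\rho^L,\rho^R)$ a representation, and $T:V\to\mathfrak{g}$ a relative Rota-Baxter operator. If $\mathcal{H}^2(V,\mathfrak{g})=0$, then every $\mathfrak{T}_1\in\mathcal{Z}^1(V,\mathfrak{g})$ is the infinitesimal of some formal deformation of $T$, i.e. there exist $\mathfrak{T}_i\in\mathrm{Hom}(V,\mathfrak{g})$, $i\ge2$, such that $T+\mathfrak{T}_1t+\sum_{i\ge2}\mathfrak{T}_it^i$ is a formal deformation of $T$.
   Context: A Leibniz algebra is a vector space $\mathfrak{g}$ with bilinear $[\cdot,\cdot]_{\mathfrak{g}}$ satisfying $[x,[y,z]_{\mathfrak{g}}]_{\mathfrak{g}}=[[x,y]_{\mathfrak{g}},z]_{\mathfrak{g}}+[y,[x,z]_{\mathfrak{g}}]_{\mathfrak{g}}$. A representation $(V;\rho^L,\rho^R)$: linear $\rho^L,\rho^R:\mathfrak{g}\to\mathfrak{gl}(V)$ with $\rho^L([x,y]_{\mathfrak{g}})=[\rho^L(x),\rho^L(y)]$, $\rho^R([x,y]_{\mathfrak{g}})=[\rho^L(x),\rho^R(y)]$, $\rho^R(y)\rho^L(x)=-\rho^R(y)\rho^R(x)$. A relative Rota-Baxter operator is a linear $T:V\to\mathfrak{g}$ with $[Tv_1,Tv_2]_{\mathfrak{g}}=T(\rho^L(Tv_1)v_2+\rho^R(Tv_2)v_1)$. Cohomology of $T$: $C^n(V,\mathfrak{g})=\mathrm{Hom}(\otimes^nV,\mathfrak{g})$,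 $C^0=\mathfrak{g}$, $\partial_T:C^n\to C^{n+1}$, $(\partial_Tf)(v_1,\dots,v_{n+1})=\sum_{i=1}^n(-1)^{i+1}[Tv_i,f(v_1,\dots,\hat v_i,\dots,v_{n+1})]_{\mathfrak{g}}-\sum_{i=1}^n(-1)^{i+1}T\rho^R(f(v_1,\dots,\hat v_i,\dots,v_{n+1}))v_i+(-1)^{n+1}[f(v_1,\dots,v_n),Tv_{n+1}]_{\mathfrak{g}}+(-1)^nT\rho^L(f(v_1,\dots,v_n))v_{n+1}+\sum_{1\le i<j\le n+1}(-1)^if(v_1,\dots,\hat v_i,\dots,v_{j-1},\rho^L(Tv_i)v_j+\rho^R(Tv_j)v_i,v_{j+1},\dots,v_{n+1})$; $\mathcal{Z}^k=\ker\partial_T\cap C^k$, $\mathcal{B}^k=\partial_T(C^{k-1})$, $\mathcal{H}^k=\mathcal{Z}^k/\mathcal{B}^k$. A formal deformation of $T$ is $T_t=\sum_{i\ge0}\mathfrak{T}_it^i$, $\mathfrak{T}_i\in\mathrm{Hom}(V,\mathfrak{g})$, $\mathfrak{T}_0=T$, extended $\mathbf{K}[[t]]$-linearly $V[[t]]\to\mathfrak{g}[[t]]$ (bracket and $\rho^L,\rho^R$ extended $\mathbf{K}[[t]]$-bilinearly), with $[T_t(u),T_t(v)]_{\mathfrak{g}}=T_t(\rho^L(T_t(u))v+\rho^R(T_t(v))u)$ for $u,v\in V$; its infinitesimal is $\mathfrak{T}_1$. *)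

theory Defs
  imports Complex_Main
begin

definition bilinear_map ::
  "('k::field \<Rightarrow> 'a::ab_group_add \<Rightarrow> 'a) \<Rightarrow> ('k \<Rightarrow> 'b::ab_group_add \<Rightarrow> 'b) \<Rightarrow>
   ('k \<Rightarrow> 'c::ab_group_add \<Rightarrow> 'c) \<Rightarrow> ('a \<Rightarrow> 'b \<Rightarrow> 'c) \<Rightarrow> bool" where
  "bilinear_map sa sb sc f \<longleftrightarrow>
     (\<forall>x. Vector_Spaces.linear sb sc (f x)) \<and> (\<forall>y. Vector_Spaces.linear sa sc (\<lambda>x. f x y))"

definition leibniz_algebra ::
  "('k::field \<Rightarrow> 'g::ab_group_add \<Rightarrow> 'g) \<Rightarrow> ('g \<Rightarrow> 'g \<Rightarrow> 'g) \<Rightarrow> bool" where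
  "leibniz_algebra sg br \<longleftrightarrow>
     vector_space sg \<and> bilinear_map sg sg sg br \<and>
     (\<forall>x y z. br x (br y z) = br (br x y) z + br y (br x z))"

definition leibniz_rep ::
  "('k::field \<Rightarrow> 'g::ab_group_add \<Rightarrow> 'g) \<Rightarrow> ('g \<Rightarrow> 'g \<Rightarrow> 'g) \<Rightarrow>
   ('k \<Rightarrow> 'v::ab_group_add \<Rightarrow> 'v) \<Rightarrow> ('g \<Rightarrow> 'v \<Rightarrow> 'v) \<Rightarrow> ('g \<Rightarrow> 'v \<Rightarrow> 'v) \<Rightarrow> bool" where
  "leibniz_rep sg br sv rL rR \<longleftrightarrow>
     vector_space sv \<and> bilinear_map sg sv sv rL \<and> bilinear_map sg sv sv rR \<and>
     (\<forall>x y v. rL (br x y) v = rL x (rL y v) - rL y (rL x v)) \<and>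
     (\<forall>x y v. rR (br x y) v = rL x (rR y v) - rR y (rL x v)) \<and>
     (\<forall>x y v. rR y (rL x v) = - rR y (rR x v))"

definition relative_RB ::
  "('k::field \<Rightarrow> 'g::ab_group_add \<Rightarrow> 'g) \<Rightarrow> ('g \<Rightarrow> 'g \<Rightarrow> 'g) \<Rightarrow>
   ('k \<Rightarrow> 'v::ab_group_add \<Rightarrow> 'v) \<Rightarrow> ('g \<Rightarrow> 'v \<Rightarrow> 'v) \<Rightarrow> ('g \<Rightarrow> 'v \<Rightarrow> 'v) \<Rightarrow>
   ('v \<Rightarrow> 'g) \<Rightarrow> bool" where
  "relative_RB sg br sv rL rR T \<longleftrightarrow>
     Vector_Spaces.linear sv sg T \<and>
     (\<forall>u v. br (T u) (T v) = T (rL (T u) v + rR (T v) u))"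

text \<open>n-cochains: elements of Hom(V^{\<otimes>n}, g), represented as functions on lists
  of vectors that are multilinear on lists of length n (values on lists of other
  lengths are irrelevant).\<close>

definition cochain ::
  "('k::field \<Rightarrow> 'g::ab_group_add \<Rightarrow> 'g) \<Rightarrow> ('k \<Rightarrow> 'v::ab_group_add \<Rightarrow> 'v) \<Rightarrow>
   nat \<Rightarrow> ('v list \<Rightarrow> 'g) \<Rightarrow> bool" where
  "cochain sg sv n f \<longleftrightarrow>
     (\<forall>vs i. length vs = n \<and> i < n \<longrightarrow> Vector_Spaces.linear sv sg (\<lambda>v. f (vs[i := v])))"

definition alt :: "nat \<Rightarrow> 'a::ab_group_add \<Rightarrow> 'a" where
  "alt i x = (if even i then x else - x)"

definition remove_nth :: "nat \<Rightarrow> 'a list \<Rightarrow> 'a list" where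
  "remove_nth i xs = take i xs @ drop (Suc i) xs"

text \<open>The coboundary operator of T, applied to an n-cochain f and a list vs of
  length n+1 (0-based indices; the 1-based index i of the paper is i+1 here).\<close>

definition dT ::
  "('g::ab_group_add \<Rightarrow> 'g \<Rightarrow> 'g) \<Rightarrow> ('g \<Rightarrow> 'v::ab_group_add \<Rightarrow> 'v) \<Rightarrow> ('g \<Rightarrow> 'v \<Rightarrow> 'v) \<Rightarrow>
   ('v \<Rightarrow> 'g) \<Rightarrow> nat \<Rightarrow> ('v list \<Rightarrow> 'g) \<Rightarrow> 'v list \<Rightarrow> 'g" where
  "dT br rL rR T n f vs =
     (\<Sum>i<n. alt i (br (T (vs ! i)) (f (remove_nth i vs))))
   - (\<Sum>i<n. alt i (T (rR (f (remove_nth i vs)) (vs ! i))))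
   + alt (n + 1) (br (f (take n vs)) (T (vs ! n)))
   + alt n (T (rL (f (take n vs)) (vs ! n)))
   + (\<Sum>j\<le>n. \<Sum>i<j. alt (i + 1)
        (f ((remove_nth i vs)[j - 1 := rL (T (vs ! i)) (vs ! j) + rR (T (vs ! j)) (vs ! i)])))"

definition cocycle where
  "cocycle sg sv br rL rR T n f \<longleftrightarrow>
     cochain sg sv n f \<and> (\<forall>vs. length vs = Suc n \<longrightarrow> dT br rL rR T n f vs = 0)"

definition coboundary where
  "coboundary sg sv br rL rR T n f \<longleftrightarrow>
     cochain sg sv n f \<and>
     (\<exists>h. cochain sg sv (n - 1) h \<and> (\<forall>vs. length vs = n \<longrightarrow> f vs = dT br rL rR T (n - 1) h vs))"

definition cohomology_vanishes where
  "cohomology_vanishes sg sv br rL rR T n \<longleftrightarrow>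
     (\<forall>f. cocycle sg sv br rL rR T n f \<longrightarrow> coboundary sg sv br rL rR T n f)"

text \<open>Formal deformation T_t = \<Sum> Tt i t^i: the K[[t]]-bilinear identity, compared
  coefficient-wise in t^n.\<close>

definition formal_deformation ::
  "('k::field \<Rightarrow> 'g::ab_group_add \<Rightarrow> 'g) \<Rightarrow> ('g \<Rightarrow> 'g \<Rightarrow> 'g) \<Rightarrow>
   ('k \<Rightarrow> 'v::ab_group_add \<Rightarrow> 'v) \<Rightarrow> ('g \<Rightarrow> 'v \<Rightarrow> 'v) \<Rightarrow> ('g \<Rightarrow> 'v \<Rightarrow> 'v) \<Rightarrow>
   ('v \<Rightarrow> 'g) \<Rightarrow> (nat \<Rightarrow> 'v \<Rightarrow> 'g) \<Rightarrow> bool" where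
  "formal_deformation sg br sv rL rR T Tt \<longleftrightarrow>
     Tt 0 = T \<and> (\<forall>i. Vector_Spaces.linear sv sg (Tt i)) \<and>
     (\<forall>n u v. (\<Sum>i\<le>n. br (Tt i u) (Tt (n - i) v))
              = (\<Sum>i\<le>n. Tt i (rL (Tt (n - i) u) v + rR (Tt (n - i) v) u)))"

end

theory Submission
  imports Defs
begin

text \<open>Let \<open>\<Theta>\<^sub>n\<close> be the coefficient of \<open>t\<^sup>n\<close> in
  \<open>[T\<^sub>t u, T\<^sub>t v] - T\<^sub>t (\<rho>\<^sup>L (T\<^sub>t u) v + \<rho>\<^sup>R (T\<^sub>t v) u)\<close>, so that \<open>T\<^sub>t\<close> is a formal
  deformation iff every \<open>\<Theta>\<^sub>n\<close> vanishes. \<open>\<Theta>\<^sub>0 = 0\<close> says that \<open>T\<close> is a relative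
  Rota-Baxter operator and \<open>\<Theta>\<^sub>1 = \<partial>\<^sub>T T\<^sub>1\<close>. For \<open>N \<ge> 1\<close> the top coefficient \<open>T\<^sub>N\<close> enters
  \<open>\<Theta>\<^sub>N\<close> only through the summand \<open>\<partial>\<^sub>T T\<^sub>N\<close>. Expanding the Leibniz and representation
  identities over the index triples \<open>a + b + c = N\<close> shows \<open>\<Sum>\<^bsub>a+b=N\<^esub> \<partial>\<^bsub>T\<^sub>a\<^esub> \<Theta>\<^sub>b = 0\<close>;
  hence, once \<open>\<Theta>\<^sub>m = 0\<close> for all \<open>m < N\<close>, the value of \<open>\<Theta>\<^sub>N\<close> at \<open>T\<^sub>N = 0\<close> is a
  2-cocycle of \<open>T\<close>. Since the second cohomology vanishes it equals \<open>\<partial>\<^sub>T h\<close>, and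
  \<open>T\<^sub>N = -h\<close> makes \<open>\<Theta>\<^sub>N\<close> vanish. Choosing the coefficients one after another gives the deformation.\<close>

definition triple_sum :: "nat \<Rightarrow> (nat \<Rightarrow> nat \<Rightarrow> nat \<Rightarrow> 'a::comm_monoid_add) \<Rightarrow> 'a" where
  "triple_sum N f = (\<Sum>(a, b, c) \<in> {(a, b, c). a + b + c = N}. f a b c)"

lemma triple_sum_nested: "(\<Sum>a\<le>N. \<Sum>i\<le>N - a. f a i (N - a - i)) = triple_sum N f"
proof -
  have "(\<Sum>a\<le>N. \<Sum>i\<le>N - a. f a i (N - a - i))
      = (\<Sum>(a, i) \<in> Sigma {..N} (\<lambda>a. {..N - a}). f a i (N - a - i))"
    by (rule sum.Sigma) auto
  also have "\<dots> = triple_sum N f"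
    unfolding triple_sum_def
    by (rule sum.reindex_bij_witness[where i="\<lambda>(a, b, c). (a, b)" and j="\<lambda>(a, i). (a, i, N - a - i)"]) auto
  finally show ?thesis .
qed

lemma triple_sum_swap12: "triple_sum N (\<lambda>a b c. f b a c) = triple_sum N f"
  unfolding triple_sum_def
  by (rule sum.reindex_bij_witness[where i="\<lambda>(a, b, c). (b, a, c)" and j="\<lambda>(a, b, c). (b, a, c)"]) auto

lemma triple_sum_swap23: "triple_sum N (\<lambda>a b c. f a c b) = triple_sum N f"
  unfolding triple_sum_def
  by (rule sum.reindex_bij_witness[where i="\<lambda>(a, b, c). (a, c, b)" and j="\<lambda>(a, b, c). (a, c, b)"]) auto

lemma triple_sum_rotate: "triple_sum N (\<lambda>a b c. f b c a) = triple_sum N f"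
  using triple_sum_swap12[of N "\<lambda>a b c. f a c b"] triple_sum_swap23[of N f] by simp

lemma triple_sum_add: "triple_sum N (\<lambda>a b c. f a b c + g a b c) = triple_sum N f + triple_sum N g"
  unfolding triple_sum_def by (simp add: case_prod_unfold sum.distrib)

lemma triple_sum_diff:
  "triple_sum N (\<lambda>a b c. f a b c - g a b c) = triple_sum N f - (triple_sum N g :: 'a::ab_group_add)"
  unfolding triple_sum_def by (simp add: case_prod_unfold sum_subtractf)

definition desc_bracket :: "('g \<Rightarrow> 'v \<Rightarrow> 'v::plus) \<Rightarrow> ('g \<Rightarrow> 'v \<Rightarrow> 'v) \<Rightarrow> ('v \<Rightarrow> 'g) \<Rightarrow> 'v \<Rightarrow> 'v \<Rightarrow> 'v" where
  "desc_bracket rL rR S u v = rL (S u) v + rR (S v) u"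

definition obstruction_term ::
  "('g::ab_group_add \<Rightarrow> 'g \<Rightarrow> 'g) \<Rightarrow> ('g \<Rightarrow> 'v \<Rightarrow> 'v::plus) \<Rightarrow> ('g \<Rightarrow> 'v \<Rightarrow> 'v) \<Rightarrow>
   (nat \<Rightarrow> 'v \<Rightarrow> 'g) \<Rightarrow> nat \<Rightarrow> nat \<Rightarrow> 'v \<Rightarrow> 'v \<Rightarrow> 'g" where
  "obstruction_term br rL rR Tt i j u v = br (Tt i u) (Tt j v) - Tt i (desc_bracket rL rR (Tt j) u v)"

definition obstruction ::
  "('g::ab_group_add \<Rightarrow> 'g \<Rightarrow> 'g) \<Rightarrow> ('g \<Rightarrow> 'v \<Rightarrow> 'v::plus) \<Rightarrow> ('g \<Rightarrow> 'v \<Rightarrow> 'v) \<Rightarrow>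
   (nat \<Rightarrow> 'v \<Rightarrow> 'g) \<Rightarrow> nat \<Rightarrow> 'v \<Rightarrow> 'v \<Rightarrow> 'g" where
  "obstruction br rL rR Tt n u v = (\<Sum>i\<le>n. obstruction_term br rL rR Tt i (n - i) u v)"

definition coboundary2 ::
  "('g::ab_group_add \<Rightarrow> 'g \<Rightarrow> 'g) \<Rightarrow> ('g \<Rightarrow> 'v \<Rightarrow> 'v::plus) \<Rightarrow> ('g \<Rightarrow> 'v \<Rightarrow> 'v) \<Rightarrow>
   ('v \<Rightarrow> 'g) \<Rightarrow> ('v \<Rightarrow> 'v \<Rightarrow> 'g) \<Rightarrow> 'v \<Rightarrow> 'v \<Rightarrow> 'v \<Rightarrow> 'g" where
  "coboundary2 br rL rR S f u v w =
     br (S u) (f v w) - br (S v) (f u w) - br (f u v) (S w)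
     - S (rR (f v w) u) + S (rR (f u w) v) + S (rL (f u v) w)
     + f u (desc_bracket rL rR S v w) - f (desc_bracket rL rR S u v) w
     - f v (desc_bracket rL rR S u w)"

lemma formal_deformation_iff_obstruction:
  "formal_deformation sg br sv rL rR T Tt \<longleftrightarrow>
     Tt 0 = T \<and> (\<forall>i. Vector_Spaces.linear sv sg (Tt i)) \<and>
     (\<forall>n u v. obstruction br rL rR Tt n u v = 0)"
  by (simp add: formal_deformation_def obstruction_def obstruction_term_def desc_bracket_def
      sum_subtractf)

lemma obstruction_cong:
  "(\<And>i. i \<le> n \<Longrightarrow> F' i = F i) \<Longrightarrow> obstruction br rL rR F' n = obstruction br rL rR F n"
  unfolding obstruction_def obstruction_term_def desc_bracket_def by (intro ext sum.cong) auto

lemma dT_1_eq: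
  "dT br rL rR S 1 g [u, v] =
     br (S u) (g [v]) + br (g [u]) (S v) - S (rR (g [v]) u) - S (rL (g [u]) v)
     - g [desc_bracket rL rR S u v]"
  by (simp add: dT_def alt_def remove_nth_def desc_bracket_def)

lemma dT_2_eq: "dT br rL rR S 2 f [u, v, w] = coboundary2 br rL rR S (\<lambda>x y. f [x, y]) u v w"
proof -
  have "\<not> Suc (Suc 0) dvd Suc (Suc (Suc 0))" by presburger
  then show ?thesis
    by (simp add: dT_def coboundary2_def desc_bracket_def alt_def remove_nth_def numeral_2_eq_2
        lessThan_Suc atMost_Suc algebra_simps)
qed

lemma linear_imp_additive: "Vector_Spaces.linear s1 s2 f \<Longrightarrow> additive f"
  by (simp add: additive_def Vector_Spaces.linear_iff)

lemma obstruction_0_eq_zero: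
  assumes "relative_RB sg br sv rL rR (F 0)"
  shows "obstruction br rL rR F 0 u v = 0"
  using assms by (simp add: relative_RB_def obstruction_def obstruction_term_def desc_bracket_def)

lemma obstruction_1_eq_dT:
  assumes "additive (F 0)"
  shows "obstruction br rL rR F 1 u v = dT br rL rR (F 0) 1 (\<lambda>vs. F 1 (hd vs)) [u, v]"
  unfolding dT_1_eq using assms
  by (simp add: obstruction_def obstruction_term_def desc_bracket_def additive.add algebra_simps)

lemma obstruction_1_eq_zero:
  assumes "relative_RB sg br sv rL rR (F 0)" and "cocycle sg sv br rL rR (F 0) 1 (\<lambda>vs. F 1 (hd vs))"
  shows "obstruction br rL rR F 1 u v = 0"
proof -
  have "additive (F 0)"
    using assms(1) unfolding relative_RB_def by (blast intro: linear_imp_additive)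
  then show ?thesis
    using obstruction_1_eq_dT[where F=F and u=u and v=v] assms(2) by (simp add: cocycle_def)
qed

locale additive_leibniz_rep =
  fixes br :: "'g::ab_group_add \<Rightarrow> 'g \<Rightarrow> 'g" and rL rR :: "'g \<Rightarrow> 'v::ab_group_add \<Rightarrow> 'v"
  assumes additive_br: "additive (\<lambda>x. br x y)" "additive (br x)"
    and additive_rL: "additive (\<lambda>x. rL x v)" "additive (rL x)"
    and additive_rR: "additive (\<lambda>x. rR x v)" "additive (rR x)"
    and leibniz: "br x (br y z) = br (br x y) z + br y (br x z)"
    and rL_br: "rL (br x y) v = rL x (rL y v) - rL y (rL x v)"
    and rR_br: "rR (br x y) v = rL x (rR y v) - rR y (rL x v)"
    and rR_rL: "rR y (rL x v) = - rR y (rR x v)"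
begin

lemmas additive_simps =
  additive_br[THEN additive.add] additive_rL[THEN additive.add] additive_rR[THEN additive.add]
  additive_br[THEN additive.diff] additive_rL[THEN additive.diff] additive_rR[THEN additive.diff]
  additive_br[THEN additive.minus] additive_rL[THEN additive.minus] additive_rR[THEN additive.minus]
  additive_br[THEN additive.zero] additive_rL[THEN additive.zero] additive_rR[THEN additive.zero]
  additive_br[THEN additive.sum] additive_rL[THEN additive.sum] additive_rR[THEN additive.sum]

lemma coboundary2_sum:
  assumes "additive S"
  shows "coboundary2 br rL rR S (\<lambda>x y. \<Sum>i\<in>I. f i x y) u v w = (\<Sum>i\<in>I. coboundary2 br rL rR S (f i) u v w)"
  using assms
  by (simp add: coboundary2_def additive_simps additive.sum additive.add additive.diff
      sum.distrib sum_subtractf)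

lemma obstruction_bianchi:
  assumes Tt: "\<And>i. additive (Tt i)"
  shows "(\<Sum>a\<le>N. coboundary2 br rL rR (Tt a) (obstruction br rL rR Tt (N - a)) u v w) = 0"
proof -
  let ?\<theta> = "obstruction_term br rL rR Tt" and ?d = "\<lambda>i. desc_bracket rL rR (Tt i)"
  define K where "K a b c = br (Tt a (?d b u v)) (Tt c w) + Tt a (rL (Tt b v) (rL (Tt c u) w))
    + Tt a (rR (Tt b w) (rL (Tt c u) v)) - Tt a (rR (Tt b w) (rL (Tt c v) u))" for a b c
  define L where "L a b c = - br (Tt a v) (br (Tt b u) (Tt c w))" for a b c
  define B where "B a b c = - br (?\<theta> a b u v) (Tt c w) + ?\<theta> a b u (?d c v w)
    - ?\<theta> a b (?d c u v) w - ?\<theta> a b v (?d c u w)" for a b c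
  txt \<open>Each of \<open>K\<close>, \<open>L\<close>, \<open>B\<close> cancels against a permutation of its indices in the
    sum over \<open>a + b + c = N\<close>.\<close>
  have termwise: "coboundary2 br rL rR (Tt a) (?\<theta> b c) u v w
      = K a b c - K a c b + L a b c - L b a c + B b c a - B a b c" for a b c
    unfolding K_def L_def B_def coboundary2_def obstruction_term_def desc_bracket_def
    by (simp add: additive_simps Tt[THEN additive.add] Tt[THEN additive.diff] Tt[THEN additive.minus]
        rL_br rR_br rR_rL leibniz[of "Tt a u" "Tt b v" "Tt c w"] algebra_simps)
  have "(\<Sum>a\<le>N. coboundary2 br rL rR (Tt a) (obstruction br rL rR Tt (N - a)) u v w)
      = (\<Sum>a\<le>N. \<Sum>i\<le>N - a. coboundary2 br rL rR (Tt a) (?\<theta> i (N - a - i)) u v w)"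
    unfolding obstruction_def by (simp add: coboundary2_sum Tt)
  also have "\<dots> = triple_sum N (\<lambda>a b c. coboundary2 br rL rR (Tt a) (?\<theta> b c) u v w)"
    by (rule triple_sum_nested)
  also have "\<dots> = 0"
    by (simp only: termwise triple_sum_add triple_sum_diff triple_sum_swap23[of N K]
        triple_sum_swap12[of N L] triple_sum_rotate[of N B]) simp
  finally show ?thesis .
qed

lemma coboundary2_obstruction_eq_zero:
  assumes Tt: "\<And>i. additive (Tt i)"
    and lower: "\<And>m u v. m < N \<Longrightarrow> obstruction br rL rR Tt m u v = 0"
  shows "coboundary2 br rL rR (Tt 0) (obstruction br rL rR Tt N) u v w = 0"
proof -
  let ?c = "\<lambda>a. coboundary2 br rL rR (Tt a) (obstruction br rL rR Tt (N - a)) u v w"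
  have "?c a = 0" if "a \<in> {..N} - {0}" for a
    using that by (simp add: coboundary2_def lower additive_simps Tt[THEN additive.zero])
  then have "(\<Sum>a\<le>N. ?c a) = ?c 0"
    by (simp add: sum.remove[of "{..N}" 0] sum.neutral)
  then show ?thesis
    using obstruction_bianchi[OF Tt, where N=N and u=u and v=v and w=w] by simp
qed

lemma obstruction_update:
  assumes F0: "additive (F 0)" and "0 < N"
  shows "obstruction br rL rR (F(N := G)) N u v
    = obstruction br rL rR (F(N := (\<lambda>_. 0))) N u v + dT br rL rR (F 0) 1 (\<lambda>vs. G (hd vs)) [u, v]"
proof -
  have split: "(\<Sum>i\<le>N. g i) = g 0 + g N + (\<Sum>i\<in>{0<..<N}. g i)" for g :: "nat \<Rightarrow> 'g"
  proof -
    have "{..N} = insert 0 (insert N {0<..<N})" using \<open>0 < N\<close> by auto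
    then show ?thesis using \<open>0 < N\<close> by (simp add: add.assoc)
  qed
  have middle: "(\<Sum>i\<in>{0<..<N}. obstruction_term br rL rR (F(N := G)) i (N - i) u v)
      = (\<Sum>i\<in>{0<..<N}. obstruction_term br rL rR (F(N := (\<lambda>_. 0))) i (N - i) u v)"
    by (rule sum.cong) (auto simp: obstruction_term_def desc_bracket_def)
  show ?thesis
    unfolding obstruction_def split middle dT_1_eq using \<open>0 < N\<close> F0
    by (simp add: obstruction_term_def desc_bracket_def additive_simps additive.add
        additive.zero algebra_simps)
qed

end

lemma exists_seq_by_extension:
  fixes Q :: "nat \<Rightarrow> (nat \<Rightarrow> 'a) \<Rightarrow> bool"
  assumes locality: "\<And>n F F'. (\<And>i. i \<le> n \<Longrightarrow> F' i = F i) \<Longrightarrow> Q n F \<Longrightarrow> Q n F'"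
    and extend: "\<And>n F. (\<And>m. m < n \<Longrightarrow> Q m F) \<Longrightarrow> \<exists>x. Q n (F(n := x))"
  shows "\<exists>F. \<forall>n. Q n F"
proof -
  have "\<exists>Fs. \<forall>n. (\<forall>m\<le>n. Q m (Fs n)) \<and> (\<forall>i\<le>n. Fs (Suc n) i = Fs n i)"
  proof (rule dependent_nat_choice)
    obtain x where "Q 0 (F(0 := x))"
      using extend[of 0 F] by blast
    then show "\<exists>F. \<forall>m\<le>0. Q m F"
      by auto
  next
    fix F n assume prefix: "\<forall>m\<le>n. Q m F"
    then obtain x where "Q (Suc n) (F(Suc n := x))"
      using extend[of "Suc n" F] by (meson less_Suc_eq_le)
    moreover have "Q m (F(Suc n := x))" if "m \<le> n" for m
      by (rule locality[where F=F]) (use that prefix in auto)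
    ultimately have "\<forall>m\<le>Suc n. Q m (F(Suc n := x))"
      by (simp add: le_Suc_eq)
    then show "\<exists>F'. (\<forall>m\<le>Suc n. Q m F') \<and> (\<forall>i\<le>n. F' i = F i)"
      by auto
  qed
  then obtain Fs where Fs: "\<And>n m. m \<le> n \<Longrightarrow> Q m (Fs n)"
    and step: "\<And>n i. i \<le> n \<Longrightarrow> Fs (Suc n) i = Fs n i"
    by blast
  have stable: "Fs n i = Fs i i" if "i \<le> n" for n i
    using that by (induction n) (auto simp: le_Suc_eq step)
  have "Q n (\<lambda>i. Fs i i)" for n
    by (rule locality[OF _ Fs[OF order_refl]]) (rule stable[symmetric])
  then show ?thesis by blast
qed

lemma additive_leibniz_repI:
  assumes "leibniz_algebra sg br" and "leibniz_rep sg br sv rL rR"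
  shows "additive_leibniz_rep br rL rR"
  using assms
  unfolding leibniz_algebra_def leibniz_rep_def bilinear_map_def additive_leibniz_rep_def
  by (blast intro: linear_imp_additive)

lemma obstruction_linear:
  assumes "leibniz_algebra sg br" and "leibniz_rep sg br sv rL rR"
    and Tt: "\<And>i. i \<le> N \<Longrightarrow> Vector_Spaces.linear sv sg (Tt i)"
  shows "Vector_Spaces.linear sv sg (\<lambda>u. obstruction br rL rR Tt N u v)"
    and "Vector_Spaces.linear sv sg (\<lambda>v. obstruction br rL rR Tt N u v)"
proof -
  from assms(1) have br_left: "\<And>y. Vector_Spaces.linear sg sg (\<lambda>x. br x y)"
    and br_right: "\<And>x. Vector_Spaces.linear sg sg (br x)" and "vector_space sg"
    unfolding leibniz_algebra_def bilinear_map_def by blast+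
  from assms(2) have rL_left: "\<And>v. Vector_Spaces.linear sg sv (\<lambda>x. rL x v)"
    and rL_right: "\<And>x. Vector_Spaces.linear sv sv (rL x)"
    and rR_left: "\<And>v. Vector_Spaces.linear sg sv (\<lambda>x. rR x v)"
    and rR_right: "\<And>x. Vector_Spaces.linear sv sv (rR x)" and "vector_space sv"
    unfolding leibniz_rep_def bilinear_map_def by blast+
  have vv: "vector_space_pair sv sv" and vg: "vector_space_pair sv sg"
    by (simp_all add: vector_space_pair_def \<open>vector_space sv\<close> \<open>vector_space sg\<close>)
  have compose: "Vector_Spaces.linear s1 s3 (\<lambda>x. g (f x))"
    if "Vector_Spaces.linear s1 s2 f" "Vector_Spaces.linear s2 s3 g" for s1 s2 s3 f g
    using Vector_Spaces.linear_compose[OF that] by (simp add: o_def)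
  note add = vector_space_pair.linear_compose_add[OF vv]
  note sub_sum = vector_space_pair.linear_compose_sub[OF vg] vector_space_pair.linear_compose_sum[OF vg]
  have "Vector_Spaces.linear sv sg (\<lambda>u. obstruction_term br rL rR Tt i (N - i) u v)" if "i \<le> N" for i
    unfolding obstruction_term_def desc_bracket_def using that
    by (intro sub_sum(1) compose[OF Tt br_left] compose[OF add[OF compose[OF Tt rL_left] rR_right] Tt])
      auto
  then show "Vector_Spaces.linear sv sg (\<lambda>u. obstruction br rL rR Tt N u v)"
    unfolding obstruction_def by (intro sub_sum(2)) auto
  have "Vector_Spaces.linear sv sg (\<lambda>v. obstruction_term br rL rR Tt i (N - i) u v)" if "i \<le> N" for i
    unfolding obstruction_term_def desc_bracket_def using that
    by (intro sub_sum(1) compose[OF Tt br_right] compose[OF add[OF rL_right compose[OF Tt rR_left]] Tt])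
      auto
  then show "Vector_Spaces.linear sv sg (\<lambda>v. obstruction br rL rR Tt N u v)"
    unfolding obstruction_def by (intro sub_sum(2)) auto
qed

lemma obstruction_cochain:
  fixes Tt :: "nat \<Rightarrow> 'v::ab_group_add \<Rightarrow> 'g::ab_group_add"
  assumes "leibniz_algebra sg br" and "leibniz_rep sg br sv rL rR"
    and "\<And>i. i \<le> N \<Longrightarrow> Vector_Spaces.linear sv sg (Tt i)"
  shows "cochain sg sv 2 (\<lambda>vs. obstruction br rL rR Tt N (vs ! 0) (vs ! 1))"
  unfolding cochain_def
proof (intro allI impI)
  fix vs :: "'v list" and i :: nat assume "length vs = 2 \<and> i < 2"
  then obtain u v where "vs = [u, v]" and "i = 0 \<or> i = 1"
    by (auto simp: numeral_2_eq_2 length_Suc_conv less_Suc_eq)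
  then show "Vector_Spaces.linear sv sg (\<lambda>x. obstruction br rL rR Tt N (vs[i := x] ! 0) (vs[i := x] ! 1))"
    using obstruction_linear[OF assms] by auto
qed

lemma obstruction_cocycle:
  fixes F :: "nat \<Rightarrow> 'v::ab_group_add \<Rightarrow> 'g::ab_group_add"
  assumes la: "leibniz_algebra sg br" and rp: "leibniz_rep sg br sv rL rR"
    and F: "\<And>i. Vector_Spaces.linear sv sg (F i)" and "F 0 = T"
    and lower: "\<And>m u v. m < N \<Longrightarrow> obstruction br rL rR F m u v = 0"
  shows "cocycle sg sv br rL rR T 2 (\<lambda>vs. obstruction br rL rR F N (vs ! 0) (vs ! 1))"
  unfolding cocycle_def
proof (intro conjI allI impI)
  show "cochain sg sv 2 (\<lambda>vs. obstruction br rL rR F N (vs ! 0) (vs ! 1))"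
    using obstruction_cochain[OF la rp F] .
  interpret additive_leibniz_rep br rL rR
    by (rule additive_leibniz_repI[OF la rp])
  fix vs :: "'v list" assume "length vs = Suc 2"
  then obtain u v w where "vs = [u, v, w]"
    by (auto simp: numeral_2_eq_2 length_Suc_conv)
  then show "dT br rL rR T 2 (\<lambda>vs. obstruction br rL rR F N (vs ! 0) (vs ! 1)) vs = 0"
    using coboundary2_obstruction_eq_zero[OF linear_imp_additive[OF F] lower]
    by (simp add: dT_2_eq \<open>F 0 = T\<close>[symmetric])
qed

lemma obstruction_extension:
  fixes F :: "nat \<Rightarrow> 'v::ab_group_add \<Rightarrow> 'g::ab_group_add"
  assumes la: "leibniz_algebra sg br" and rp: "leibniz_rep sg br sv rL rR"
    and H2: "cohomology_vanishes sg sv br rL rR T 2"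
    and F: "\<And>i. i < N \<Longrightarrow> Vector_Spaces.linear sv sg (F i)" and "F 0 = T" and "0 < N"
    and lower: "\<And>m u v. m < N \<Longrightarrow> obstruction br rL rR F m u v = 0"
  shows "\<exists>G. Vector_Spaces.linear sv sg G \<and> (\<forall>u v. obstruction br rL rR (F(N := G)) N u v = 0)"
proof -
  interpret additive_leibniz_rep br rL rR
    by (rule additive_leibniz_repI[OF la rp])
  have vs: "vector_space_pair sv sg"
    using F[OF \<open>0 < N\<close>] by (simp add: vector_space_pair_def Vector_Spaces.linear_iff)
  txt \<open>Only the components of \<open>F\<close> below \<open>N\<close> are known to be linear.\<close>
  define F0 where "F0 = (\<lambda>i. if i < N then F i else (\<lambda>_. 0))"
  have F0_linear: "Vector_Spaces.linear sv sg (F0 i)" for i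
    by (simp add: F0_def F vector_space_pair.linear_zero[OF vs])
  have "F0 0 = T"
    using \<open>F 0 = T\<close> \<open>0 < N\<close> by (simp add: F0_def)
  have "obstruction br rL rR F0 m = obstruction br rL rR F m" if "m < N" for m
    using that by (intro obstruction_cong) (simp add: F0_def)
  then have "cocycle sg sv br rL rR T 2 (\<lambda>vs. obstruction br rL rR F0 N (vs ! 0) (vs ! 1))"
    using obstruction_cocycle[where F=F0, OF la rp F0_linear \<open>F0 0 = T\<close>] lower by simp
  then obtain h where h: "cochain sg sv 1 h"
    and dh: "\<And>vs. length vs = 2 \<Longrightarrow> obstruction br rL rR F0 N (vs ! 0) (vs ! 1) = dT br rL rR T 1 h vs"
    using H2 unfolding cohomology_vanishes_def coboundary_def by auto
  define G where "G v = - h [v]" for v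
  have "Vector_Spaces.linear sv sg (\<lambda>v. h [v])"
    using h[unfolded cochain_def, rule_format, of "[0]" 0] by simp
  then have "Vector_Spaces.linear sv sg G"
    unfolding G_def by (rule vector_space_pair.linear_compose_neg[OF vs])
  moreover have "obstruction br rL rR (F(N := G)) N u v = 0" for u v
  proof -
    have T: "additive T"
      using F0_linear[of 0] \<open>F0 0 = T\<close> by (simp add: linear_imp_additive)
    have "obstruction br rL rR (F(N := G)) N u v = obstruction br rL rR (F0(N := G)) N u v"
      by (intro obstruction_cong[THEN fun_cong, THEN fun_cong]) (simp add: F0_def)
    also have "\<dots> = obstruction br rL rR F0 N u v + dT br rL rR T 1 (\<lambda>vs. G (hd vs)) [u, v]"
      using obstruction_update[of F0 N G u v] T \<open>F0 0 = T\<close> \<open>0 < N\<close>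
      by (simp add: F0_def fun_upd_idem)
    also have "\<dots> = dT br rL rR T 1 h [u, v] + dT br rL rR T 1 (\<lambda>vs. G (hd vs)) [u, v]"
      using dh[of "[u, v]"] by simp
    also have "\<dots> = 0"
      unfolding dT_1_eq G_def
      by (simp add: additive_simps additive.minus[OF T] additive.diff[OF T] additive.add[OF T])
    finally show ?thesis .
  qed
  ultimately show ?thesis by blast
qed

theorem corollary3p27:
  fixes sg :: "'k::field \<Rightarrow> 'g::ab_group_add \<Rightarrow> 'g"
    and sv :: "'k \<Rightarrow> 'v::ab_group_add \<Rightarrow> 'v"
    and br :: "'g \<Rightarrow> 'g \<Rightarrow> 'g"
    and rL rR :: "'g \<Rightarrow> 'v \<Rightarrow> 'v"
    and T T1 :: "'v \<Rightarrow> 'g"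
  assumes "leibniz_algebra sg br"
    and "leibniz_rep sg br sv rL rR"
    and "relative_RB sg br sv rL rR T"
    and "cohomology_vanishes sg sv br rL rR T 2"
    and "Vector_Spaces.linear sv sg T1"
    and "cocycle sg sv br rL rR T 1 (\<lambda>vs. T1 (hd vs))"
  shows "\<exists>Tt :: nat \<Rightarrow> 'v \<Rightarrow> 'g. formal_deformation sg br sv rL rR T Tt \<and> Tt 1 = T1"
proof -
  define Q where "Q n F \<longleftrightarrow> Vector_Spaces.linear sv sg (F n) \<and> (n = 0 \<longrightarrow> F n = T) \<and>
    (n = 1 \<longrightarrow> F n = T1) \<and> (\<forall>u v. obstruction br rL rR F n u v = 0)" for n F
  have "\<exists>Tt. \<forall>n. Q n Tt"
  proof (rule exists_seq_by_extension)
    show "Q n F'" if "\<And>i. i \<le> n \<Longrightarrow> F' i = F i" and "Q n F" for n F F'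
      using that obstruction_cong[of n F' F] unfolding Q_def by simp
  next
    fix n and F :: "nat \<Rightarrow> 'v \<Rightarrow> 'g" assume lower: "\<And>m. m < n \<Longrightarrow> Q m F"
    then have F0: "F 0 = T" if "0 < n"
      using that by (simp add: Q_def)
    consider "n = 0" | "n = 1" | "2 \<le> n" by linarith
    then show "\<exists>x. Q n (F(n := x))"
    proof cases
      case 1
      with assms(3) show ?thesis
        by (auto simp: Q_def relative_RB_def intro: obstruction_0_eq_zero)
    next
      case 2
      with F0 assms(3,6) have "obstruction br rL rR (F(1 := T1)) 1 u v = 0" for u v
        by (intro obstruction_1_eq_zero[where sg=sg and sv=sv]) simp_all
      with 2 assms(5) show ?thesis
        by (auto simp: Q_def)
    next
      case 3
      with F0 lower have "\<exists>G. Vector_Spaces.linear sv sg G \<and>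
          (\<forall>u v. obstruction br rL rR (F(n := G)) n u v = 0)"
        by (intro obstruction_extension[OF assms(1,2,4)]) (auto simp: Q_def)
      with 3 show ?thesis
        by (auto simp: Q_def)
    qed
  qed
  then show ?thesis
    unfolding formal_deformation_iff_obstruction Q_def by blast
qed

end
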